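(* Let $(\mathcal{X},d_{\mathcal{X}})$ and $(\mathcal{Y},d_{\mathcal{Y}})$ be metric spaces, let $(X,Y)\sim\mathbb{G}$ on $\mathcal{X}\times\mathcal{Y}$, and let $m$ be the conditional Fréchet mean function, $m(x)=\arg\min_{y\in\mathcal{Y}}\mathsf{E}[d_{\mathcal{Y}}(Y,y)^2\mid X=x]$, assumed to exist uniquely for $\mathbb{G}$-a.e. $x$. Assume: (i) $\mathcal{L}_n=\{(X_1,Y_1),\ldots,(X_n,Y_n)\}$ consists of $n$ i.i.d. copies of $(X,Y)$, independent of $(X,Y)$; (ii) the cumulative distribution function $F_R$ of $R=d_{\mathcal{Y}}(Y,m(X))$ is continuous on $\mathbb{R}$; (iii) $d_{\mathcal{Y}}(m(X_1),\widehat{m}_{(1)}(X_1))\to0$ in probability as $n\to\infty$. Then, as $n\to\infty$, $$\sup_{t\in\mathbb{R}}\big|F_{\widehat{R}^{\mathrm{oob}}_1,\ldots,\widehat{R}^{\mathrm{oob}}_n}(t)-F_R(t)\big|\to0$$ in probability. In particular, $F_R(\widehat{R}_{[1-\alpha,n]})\to 1-\alpha$ in probability for every $\alpha\in(0,1)$.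
   Context: $\widehat{m}$ denotes a random forest (more generally, a bagged regression estimator) trained on $\mathcal{L}_n$ from $B$ base estimators each built on a random resample of $\mathcal{L}_n$. For each $i$, the out-of-bag (OOB) estimator $\widehat{m}_{(i)}$ aggregates only those base estimators whose resample does not contain $(X_i,Y_i)$. The OOB errors are $\widehat{R}^{\mathrm{oob}}_i=d_{\mathcal{Y}}(Y_i,\widehat{m}_{(i)}(X_i))$; $F_{\widehat{R}^{\mathrm{oob}}_1,\ldots,\widehat{R}^{\mathrm{oob}}_n}$ is their empirical distribution function and $\widehat{R}_{[1-\alpha,n]}$ its $(1-\alpha)$-quantile. *)

theory Defs
  imports "HOL-Probability.Probability"
begin

text \<open>Conditional Frechet mean of Y given X for (X,Y) ~ G on 'x \<times> 'y:
  m x is, for G-a.e. x, the unique minimiser over y of E[d(Y,y)^2 | X = x],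
  where h y is a version of x \<mapsto> E[d(Y,y)^2 | X = x].\<close>
definition cond_frechet_mean :: "('x::metric_space \<times> 'y::metric_space) measure \<Rightarrow> ('x \<Rightarrow> 'y) \<Rightarrow> bool" where
  "cond_frechet_mean G m \<longleftrightarrow>
     m \<in> borel_measurable borel \<and>
     (\<exists>h :: 'y \<Rightarrow> 'x \<Rightarrow> ennreal.
        (\<forall>y. h y \<in> borel_measurable borel \<and>
             (AE p in G. h y (fst p) =
                nn_cond_exp G (vimage_algebra (space G) fst borel)
                  (\<lambda>q. ennreal ((dist (snd q) y)\<^sup>2)) p)) \<and>
        (AE x in distr G borel fst. \<forall>y. y \<noteq> m x \<longrightarrow> h (m x) x < h y x))"

text \<open>Probability space for sample size n: the sample L_n (coordinates 0..n-1 of the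
  first component, i.i.d. with law G) and, independently, B n i.i.d. pairs
  (resample index list, auxiliary randomisation of the base estimator).\<close>
definition bag_space :: "('x \<times> 'y) measure \<Rightarrow> (nat \<Rightarrow> nat) \<Rightarrow> (nat \<Rightarrow> nat list pmf)
     \<Rightarrow> (nat \<Rightarrow> 't measure) \<Rightarrow> nat
     \<Rightarrow> ((nat \<Rightarrow> 'x \<times> 'y) \<times> (nat \<Rightarrow> nat list \<times> 't)) measure" where
  "bag_space G B rs \<Theta> n =
     PiM {..<n} (\<lambda>_. G) \<Otimes>\<^sub>M PiM {..<B n} (\<lambda>_. measure_pmf (rs n) \<Otimes>\<^sub>M \<Theta> n)"

definition oob :: "(nat \<Rightarrow> ('x \<times> 'y) list \<Rightarrow> 't \<Rightarrow> 'e) \<Rightarrow> (nat \<Rightarrow> 'e list \<Rightarrow> 'x \<Rightarrow> 'y)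
     \<Rightarrow> (nat \<Rightarrow> nat) \<Rightarrow> nat \<Rightarrow> (nat \<Rightarrow> 'x \<times> 'y) \<times> (nat \<Rightarrow> nat list \<times> 't) \<Rightarrow> nat \<Rightarrow> 'x \<Rightarrow> 'y" where
  "oob base agg B n \<omega> i =
     agg n [base n (map (fst \<omega>) (fst (snd \<omega> b))) (snd (snd \<omega> b)).
              b \<leftarrow> [0..<B n], i \<notin> set (fst (snd \<omega> b))]"

definition oob_res where
  "oob_res base agg B n \<omega> i =
     dist (snd (fst \<omega> i)) (oob base agg B n \<omega> i (fst (fst \<omega> i)))"

definition ecdf :: "nat \<Rightarrow> (nat \<Rightarrow> real) \<Rightarrow> real \<Rightarrow> real" where
  "ecdf n r t = real (card {i. i < n \<and> r i \<le> t}) / real n"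

definition quantile :: "(real \<Rightarrow> real) \<Rightarrow> real \<Rightarrow> real" where
  "quantile F p = Inf {t. p \<le> F t}"

definition to_zero_in_prob :: "(nat \<Rightarrow> 'a measure) \<Rightarrow> (nat \<Rightarrow> 'a \<Rightarrow> real) \<Rightarrow> bool" where
  "to_zero_in_prob P Z \<longleftrightarrow>
     (\<forall>e>0. (\<lambda>n. measure (P n) {\<omega> \<in> space (P n). \<bar>Z n \<omega>\<bar> > e}) \<longlonglongrightarrow> 0)"

end

theory Submission
  imports Defs
begin

(* Let R_i = d(Y_i, m(X_i)) be the true residuals and D_i = d(m(X_i), m_(i)(X_i)) the errors of
   the OOB estimators; by the triangle inequality |R_i^oob - R_i| <= D_i. Hence at every t the OOB
   empirical distribution function lies between those of the R_i at t - e and at t + e, up to the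
   fraction of indices with D_i > e. The R_i are i.i.d. with distribution function F_R, so by
   Hoeffding's inequality their empirical distribution function converges pointwise. Relabelling
   the observations, together with the indices recorded in the resamples, preserves the law of the
   whole bagging experiment, so the D_i are exchangeable and, by Markov's inequality, the
   probability that more than a fraction c of them exceed e is at most P(D_1 > e) / c, which tends
   to zero. Continuity of F_R turns pointwise into uniform convergence through a finite grid, and
   |F_R(R_[1-alpha,n]) - (1 - alpha)| is bounded by the uniform distance. *)

section \<open>Asymptotically null events\<close>

text \<open>The events need not be measurable (they involve a supremum over all \<open>t\<close>), so only
  measurable supersets of them are required to have vanishing probability.\<close>
definition asymp_null :: "(nat \<Rightarrow> 'a measure) \<Rightarrow> (nat \<Rightarrow> 'a \<Rightarrow> bool) \<Rightarrow> bool" where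
  "asymp_null P Z \<longleftrightarrow>
     (\<exists>E. (\<forall>\<^sub>F n in sequentially. E n \<in> sets (P n) \<and> {\<omega> \<in> space (P n). Z n \<omega>} \<subseteq> E n)
        \<and> (\<lambda>n. measure (P n) (E n)) \<longlonglongrightarrow> 0)"

lemma asymp_nullI:
  assumes "\<forall>\<^sub>F n in sequentially. {\<omega> \<in> space (P n). Z n \<omega>} \<in> sets (P n)"
    and "\<forall>\<^sub>F n in sequentially. measure (P n) {\<omega> \<in> space (P n). Z n \<omega>} \<le> b n"
    and "b \<longlonglongrightarrow> 0"
  shows "asymp_null P Z"
  unfolding asymp_null_def
proof (intro exI conjI)
  show "\<forall>\<^sub>F n in sequentially. {\<omega> \<in> space (P n). Z n \<omega>} \<in> sets (P n)
      \<and> {\<omega> \<in> space (P n). Z n \<omega>} \<subseteq> {\<omega> \<in> space (P n). Z n \<omega>}"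
    using assms(1) by (rule eventually_mono) blast
  show "(\<lambda>n. measure (P n) {\<omega> \<in> space (P n). Z n \<omega>}) \<longlonglongrightarrow> 0"
    by (rule tendsto_sandwich[where f = "\<lambda>_. 0" and h = b])
      (use assms(2,3) in \<open>simp_all add: measure_nonneg\<close>)
qed

lemma asymp_null_mono:
  assumes "asymp_null P Z"
    and "\<forall>\<^sub>F n in sequentially. \<forall>\<omega> \<in> space (P n). Z' n \<omega> \<longrightarrow> Z n \<omega>"
  shows "asymp_null P Z'"
proof -
  obtain E where E: "\<forall>\<^sub>F n in sequentially. E n \<in> sets (P n) \<and> {\<omega> \<in> space (P n). Z n \<omega>} \<subseteq> E n"
    and lim: "(\<lambda>n. measure (P n) (E n)) \<longlonglongrightarrow> 0"
    using assms(1) unfolding asymp_null_def by blast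
  have "\<forall>\<^sub>F n in sequentially. E n \<in> sets (P n) \<and> {\<omega> \<in> space (P n). Z' n \<omega>} \<subseteq> E n"
    using E assms(2) by eventually_elim blast
  with lim show ?thesis
    unfolding asymp_null_def by blast
qed

lemma asymp_null_disj:
  assumes "asymp_null P Z" and "asymp_null P Z'"
  shows "asymp_null P (\<lambda>n \<omega>. Z n \<omega> \<or> Z' n \<omega>)"
proof -
  obtain E where E: "\<forall>\<^sub>F n in sequentially. E n \<in> sets (P n) \<and> {\<omega> \<in> space (P n). Z n \<omega>} \<subseteq> E n"
    and lim: "(\<lambda>n. measure (P n) (E n)) \<longlonglongrightarrow> 0"
    using assms(1) unfolding asymp_null_def by blast
  obtain E' where E': "\<forall>\<^sub>F n in sequentially. E' n \<in> sets (P n) \<and> {\<omega> \<in> space (P n). Z' n \<omega>} \<subseteq> E' n"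
    and lim': "(\<lambda>n. measure (P n) (E' n)) \<longlonglongrightarrow> 0"
    using assms(2) unfolding asymp_null_def by blast
  have "asymp_null P (\<lambda>n \<omega>. \<omega> \<in> E n \<union> E' n)"
  proof (rule asymp_nullI)
    show "\<forall>\<^sub>F n in sequentially. {\<omega> \<in> space (P n). \<omega> \<in> E n \<union> E' n} \<in> sets (P n)"
      using E E' by eventually_elim auto
    show "\<forall>\<^sub>F n in sequentially. measure (P n) {\<omega> \<in> space (P n). \<omega> \<in> E n \<union> E' n}
        \<le> measure (P n) (E n) + measure (P n) (E' n)"
      using E E'
    proof eventually_elim
      case (elim n)
      then have "{\<omega> \<in> space (P n). \<omega> \<in> E n \<union> E' n} = E n \<union> E' n"
        using sets.sets_into_space by blast
      with elim show ?case
        by (simp add: measure_Un_le)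
    qed
    show "(\<lambda>n. measure (P n) (E n) + measure (P n) (E' n)) \<longlonglongrightarrow> 0"
      using tendsto_add[OF lim lim'] by simp
  qed
  then show ?thesis
    by (rule asymp_null_mono) (use E E' in \<open>eventually_elim, blast\<close>)
qed

lemma asymp_null_Bex:
  assumes "finite S" and "\<And>s. s \<in> S \<Longrightarrow> asymp_null P (Z s)"
  shows "asymp_null P (\<lambda>n \<omega>. \<exists>s\<in>S. Z s n \<omega>)"
  using assms
proof (induction S rule: finite_induct)
  case empty
  show ?case
    by (rule asymp_nullI[where b = "\<lambda>_. 0"]) simp_all
next
  case (insert s S)
  then have "asymp_null P (\<lambda>n \<omega>. Z s n \<omega> \<or> (\<exists>s\<in>S. Z s n \<omega>))"
    by (intro asymp_null_disj) simp_all
  then show ?case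
    by (rule asymp_null_mono) simp
qed

lemma to_zero_in_probI:
  assumes "\<And>n. finite_measure (P n)"
    and "\<And>e. 0 < e \<Longrightarrow> asymp_null P (\<lambda>n \<omega>. e < \<bar>Z n \<omega>\<bar>)"
  shows "to_zero_in_prob P Z"
  unfolding to_zero_in_prob_def
proof (intro allI impI)
  fix e :: real
  assume "0 < e"
  then obtain E where E: "\<forall>\<^sub>F n in sequentially.
      E n \<in> sets (P n) \<and> {\<omega> \<in> space (P n). e < \<bar>Z n \<omega>\<bar>} \<subseteq> E n"
    and lim: "(\<lambda>n. measure (P n) (E n)) \<longlonglongrightarrow> 0"
    using assms(2) unfolding asymp_null_def by blast
  show "(\<lambda>n. measure (P n) {\<omega> \<in> space (P n). \<bar>Z n \<omega>\<bar> > e}) \<longlonglongrightarrow> 0"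
  proof (rule tendsto_sandwich[OF _ _ tendsto_const lim])
    show "\<forall>\<^sub>F n in sequentially. measure (P n) {\<omega> \<in> space (P n). e < \<bar>Z n \<omega>\<bar>} \<le> measure (P n) (E n)"
      using E by eventually_elim (meson assms(1) finite_measure.finite_measure_mono)
  qed (simp add: measure_nonneg)
qed

section \<open>Empirical distribution functions and their quantiles\<close>

lemma ecdf_nonneg: "0 \<le> ecdf n r t"
  unfolding ecdf_def by simp

lemma ecdf_le_1: "ecdf n r t \<le> 1"
proof -
  have "card {i. i < n \<and> r i \<le> t} \<le> card {..<n}"
    by (rule card_mono) auto
  then show ?thesis
    unfolding ecdf_def by (cases "n = 0") (simp_all add: divide_le_eq_1)
qed

lemma mono_ecdf: "mono (ecdf n r)"
  unfolding ecdf_def by (intro monoI divide_right_mono) (auto intro!: card_mono)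

lemma bdd_above_abs_ecdf_diff:
  assumes "\<And>t. 0 \<le> F t \<and> F t \<le> 1"
  shows "bdd_above (range (\<lambda>t. \<bar>ecdf n r t - F t\<bar>))"
proof (rule bdd_aboveI)
  fix x assume "x \<in> range (\<lambda>t. \<bar>ecdf n r t - F t\<bar>)"
  then obtain t where "x = \<bar>ecdf n r t - F t\<bar>"
    by blast
  then show "x \<le> 1"
    using assms[of t] ecdf_nonneg[of n r t] ecdf_le_1[of n r t] by linarith
qed

lemma ecdf_perturb:
  assumes "\<And>i. \<bar>r i - q i\<bar> \<le> d i"
  shows "ecdf n r s \<le> ecdf n q (s + e) + card {i. i < n \<and> e < d i} / n"
proof -
  have "card {i. i < n \<and> r i \<le> s} \<le> card ({i. i < n \<and> q i \<le> s + e} \<union> {i. i < n \<and> e < d i})"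
  proof (rule card_mono)
    show "{i. i < n \<and> r i \<le> s} \<subseteq> {i. i < n \<and> q i \<le> s + e} \<union> {i. i < n \<and> e < d i}"
    proof (rule subsetI)
      fix i assume "i \<in> {i. i < n \<and> r i \<le> s}"
      moreover have "q i \<le> s + e \<or> e < d i"
        using assms[of i] calculation by (auto simp: abs_le_iff)
      ultimately show "i \<in> {i. i < n \<and> q i \<le> s + e} \<union> {i. i < n \<and> e < d i}"
        by blast
    qed
  qed simp
  also have "\<dots> \<le> card {i. i < n \<and> q i \<le> s + e} + card {i. i < n \<and> e < d i}"
    by (rule card_Un_le)
  finally show ?thesis
    unfolding ecdf_def add_divide_distrib[symmetric] by (intro divide_right_mono) simp_all
qed

lemma abs_ecdf_perturb_le:
  assumes "\<And>i. \<bar>r i - q i\<bar> \<le> d i"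
  shows "\<bar>ecdf n r s - F s\<bar> \<le> \<bar>ecdf n q (s + e) - F (s + e)\<bar> + \<bar>ecdf n q (s - e) - F (s - e)\<bar>
    + card {i. i < n \<and> e < d i} / n + \<bar>F (s + e) - F s\<bar> + \<bar>F (s - e) - F s\<bar>"
proof -
  have "ecdf n r s \<le> ecdf n q (s + e) + card {i. i < n \<and> e < d i} / n"
    using assms by (rule ecdf_perturb)
  moreover have "ecdf n q (s - e) \<le> ecdf n r s + card {i. i < n \<and> e < d i} / n"
    using ecdf_perturb[of q r d n "s - e" e] assms by (simp add: abs_minus_commute)
  ultimately show ?thesis
    by linarith
qed

lemma ecdf_attained_at_sample:
  assumes "0 < ecdf n r t"
  obtains i where "i < n" "r i \<le> t" "ecdf n r (r i) = ecdf n r t"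
proof -
  define I where "I = {i. i < n \<and> r i \<le> t}"
  have "I \<noteq> {}"
  proof
    assume "I = {}"
    then show False
      using assms unfolding ecdf_def I_def[symmetric] by simp
  qed
  moreover have "finite I"
    unfolding I_def by simp
  ultimately have "Max (r ` I) \<in> r ` I"
    by (intro Max_in) auto
  then obtain i where "i \<in> I" and i: "r i = Max (r ` I)"
    by (metis imageE)
  have "{j. j < n \<and> r j \<le> r i} = I"
  proof
    show "{j. j < n \<and> r j \<le> r i} \<subseteq> I"
      using \<open>i \<in> I\<close> unfolding I_def by auto
    show "I \<subseteq> {j. j < n \<and> r j \<le> r i}"
      using \<open>finite I\<close> unfolding i by (auto simp: I_def)
  qed
  then have "ecdf n r (r i) = ecdf n r t"
    unfolding ecdf_def I_def by simp
  with \<open>i \<in> I\<close> show thesis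
    using that unfolding I_def by blast
qed

lemma quantile_ecdf:
  assumes "0 < n" "0 < p" "p \<le> 1"
  shows "p \<le> ecdf n r (quantile (ecdf n r) p)"
    and "\<And>t. p \<le> ecdf n r t \<Longrightarrow> quantile (ecdf n r) p \<le> t"
proof -
  define V where "V = {t \<in> r ` {..<n}. p \<le> ecdf n r t}"
  define v where "v = Min V"
  have "Max (r ` {..<n}) \<in> V"
  proof -
    have "{i. i < n \<and> r i \<le> Max (r ` {..<n})} = {..<n}"
      by auto
    then show ?thesis
      using assms by (auto simp: V_def ecdf_def intro!: Max_in)
  qed
  then have "finite V" "V \<noteq> {}"
    unfolding V_def by auto
  have below: "v \<le> t" if "p \<le> ecdf n r t" for t
  proof -
    have "0 < ecdf n r t"
      using \<open>0 < p\<close> that by linarith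
    then obtain i where "i < n" "r i \<le> t" "ecdf n r (r i) = ecdf n r t"
      by (rule ecdf_attained_at_sample)
    then have "r i \<in> V"
      using that unfolding V_def by auto
    then show ?thesis
      unfolding v_def using \<open>finite V\<close> \<open>r i \<le> t\<close> by (meson Min_le order.trans)
  qed
  have "v \<in> V"
    unfolding v_def using \<open>finite V\<close> \<open>V \<noteq> {}\<close> by simp
  have "quantile (ecdf n r) p = v"
    unfolding quantile_def
  proof (rule cInf_eq_minimum)
    show "v \<in> {t. p \<le> ecdf n r t}"
      using \<open>v \<in> V\<close> unfolding V_def by blast
  qed (use below in blast)
  with \<open>v \<in> V\<close> below show "p \<le> ecdf n r (quantile (ecdf n r) p)"
    and "\<And>t. p \<le> ecdf n r t \<Longrightarrow> quantile (ecdf n r) p \<le> t"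
    unfolding V_def by auto
qed

lemma abs_quantile_ecdf_le:
  fixes F :: "real \<Rightarrow> real"
  assumes F: "continuous_on UNIV F" and "0 < n" "0 < p" "p \<le> 1"
    and close: "\<And>t. \<bar>ecdf n r t - F t\<bar> \<le> c"
  shows "\<bar>F (quantile (ecdf n r) p) - p\<bar> \<le> c"
proof -
  define q where "q = quantile (ecdf n r) p"
  have "p - c \<le> F q"
    using quantile_ecdf(1)[OF assms(2-4), of r] close[of q] unfolding q_def by (simp add: abs_le_iff)
  moreover have "F q \<le> p + c"
  proof (rule tendsto_upperbound)
    show "(F \<longlongrightarrow> F q) (at_left q)"
      using F unfolding continuous_on_def by (auto intro: tendsto_mono[OF at_le])
    have le: "F t \<le> p + c" if "t < q" for t
    proof -
      have "ecdf n r t < p"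
        using quantile_ecdf(2)[OF assms(2-4), of r t] that unfolding q_def by (meson not_le)
      then show ?thesis
        using close[of t] by (simp add: abs_le_iff)
    qed
    show "\<forall>\<^sub>F t in at_left q. F t \<le> p + c"
      using eventually_at_left_real[of "q - 1" q] by (simp add: eventually_mono le)
  qed simp
  ultimately show ?thesis
    unfolding q_def by (simp add: abs_le_iff)
qed

section \<open>Uniform approximation of a continuous distribution function\<close>

lemma mono_tendsto_bounds:
  fixes F :: "real \<Rightarrow> real"
  assumes "mono F" "(F \<longlongrightarrow> 0) at_bot" "(F \<longlongrightarrow> 1) at_top"
  shows "0 \<le> F t \<and> F t \<le> 1"
proof
  have "\<forall>\<^sub>F s in at_bot. F s \<le> F t"
    using eventually_le_at_bot[of t] by eventually_elim (rule monoD[OF assms(1)])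
  then show "0 \<le> F t"
    using assms(2) by (intro tendsto_upperbound) auto
  have "\<forall>\<^sub>F s in at_top. F t \<le> F s"
    using eventually_ge_at_top[of t] by eventually_elim (rule monoD[OF assms(1)])
  then show "F t \<le> 1"
    using assms(3) by (intro tendsto_lowerbound) auto
qed

lemma distribution_function_limits:
  fixes f :: "'a \<Rightarrow> real"
  assumes "prob_space M" "f \<in> borel_measurable M" "\<And>t. F t = measure M {x \<in> space M. f x \<le> t}"
  shows "mono F" "(F \<longlongrightarrow> 0) at_bot" "(F \<longlongrightarrow> 1) at_top"
proof -
  interpret real_distribution "distr M borel f"
    using assms(1,2) by (simp add: prob_space.real_distribution_distr)
  have "F t = cdf (distr M borel f) t" for t
    using assms(2,3) unfolding cdf_def
    by (subst measure_distr) (auto simp: vimage_def Int_def conj_commute)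
  then have "F = cdf (distr M borel f)"
    by blast
  then show "mono F" "(F \<longlongrightarrow> 0) at_bot" "(F \<longlongrightarrow> 1) at_top"
    by (auto intro: monoI cdf_nondecreasing cdf_lim_at_bot cdf_lim_at_top_prob)
qed

lemma grid_bracket:
  fixes a h t :: real
  assumes "0 < h" "a \<le> t" "t < a + real K * h"
  obtains j where "j < K" "a + real j * h \<le> t" "t < a + real (Suc j) * h"
proof
  define j where "j = nat \<lfloor>(t - a) / h\<rfloor>"
  have "real j \<le> (t - a) / h" "(t - a) / h < real j + 1"
    unfolding j_def using assms by (simp_all add: divide_nonneg_pos)
  then show "a + real j * h \<le> t" "t < a + real (Suc j) * h"
    using \<open>0 < h\<close> by (simp_all add: field_simps)
  have "(t - a) / h < real K"
    using assms by (simp add: field_simps)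
  with \<open>real j \<le> (t - a) / h\<close> show "j < K"
    by linarith
qed

lemma uniform_grid_bracketing:
  fixes F :: "real \<Rightarrow> real"
  assumes "uniformly_continuous_on {a..b} F" "a < b" "0 < \<eta>"
  obtains S where "finite S" "a \<in> S" "b \<in> S"
    "\<forall>t\<in>{a..<b}. \<exists>s0\<in>S. \<exists>s1\<in>S. s0 \<le> t \<and> t \<le> s1 \<and> F s1 - F s0 < \<eta>"
proof -
  obtain \<delta> where "0 < \<delta>"
    and \<delta>: "\<And>x y. x \<in> {a..b} \<Longrightarrow> y \<in> {a..b} \<Longrightarrow> dist y x < \<delta> \<Longrightarrow> dist (F y) (F x) < \<eta>"
    using assms(1,3) unfolding uniformly_continuous_on_def by metis
  define K where "K = nat \<lceil>(b - a) / \<delta>\<rceil> + 1"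
  define h where "h = (b - a) / K"
  have "0 < K" "(b - a) / \<delta> < K"
    unfolding K_def by linarith+
  then have "0 < h" "h < \<delta>" "a + real K * h = b"
    unfolding h_def using \<open>a < b\<close> \<open>0 < \<delta>\<close> by (simp_all add: field_simps)
  define S where "S = (\<lambda>j. a + real j * h) ` {..K}"
  show thesis
  proof (rule that[of S])
    show "finite S"
      unfolding S_def by simp
    show "a \<in> S" "b \<in> S"
      unfolding S_def using \<open>a + real K * h = b\<close> by force+
    show "\<forall>t\<in>{a..<b}. \<exists>s0\<in>S. \<exists>s1\<in>S. s0 \<le> t \<and> t \<le> s1 \<and> F s1 - F s0 < \<eta>"
    proof
      fix t
      assume "t \<in> {a..<b}"
      then obtain j where j: "j < K" "a + real j * h \<le> t" "t < a + real (Suc j) * h"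
        using grid_bracket[OF \<open>0 < h\<close>] \<open>a + real K * h = b\<close> by (metis atLeastLessThan_iff)
      define s0 s1 where "s0 = a + real j * h" and "s1 = a + real (Suc j) * h"
      have "s0 \<in> S"
        unfolding S_def s0_def using j(1) by (intro image_eqI[where x = j]) auto
      moreover have "s1 \<in> S"
        unfolding S_def s1_def using j(1) by (intro image_eqI[where x = "Suc j"]) auto
      moreover have "s0 \<le> t" "t \<le> s1"
        using j unfolding s0_def s1_def by simp_all
      moreover have "F s1 - F s0 < \<eta>"
      proof -
        have "real (Suc j) * h \<le> real K * h"
          using j(1) \<open>0 < h\<close> by (intro mult_right_mono) auto
        then have "s0 \<in> {a..b}" "s1 \<in> {a..b}" "dist s1 s0 < \<delta>"
          using \<open>0 < h\<close> \<open>h < \<delta>\<close> \<open>a + real K * h = b\<close>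
          unfolding s0_def s1_def by (auto simp: dist_real_def algebra_simps)
        then show ?thesis
          using \<delta> by (force simp: dist_real_def)
      qed
      ultimately show "\<exists>s0\<in>S. \<exists>s1\<in>S. s0 \<le> t \<and> t \<le> s1 \<and> F s1 - F s0 < \<eta>"
        by blast
    qed
  qed
qed

lemma finite_bracketing_grid:
  fixes F :: "real \<Rightarrow> real"
  assumes F: "continuous_on UNIV F" "(F \<longlongrightarrow> 0) at_bot" "(F \<longlongrightarrow> 1) at_top" and "0 < \<eta>"
  obtains S a b where "finite S" "a \<in> S" "b \<in> S" "F a < \<eta>" "1 - \<eta> < F b"
    "\<forall>t\<in>{a..<b}. \<exists>s0\<in>S. \<exists>s1\<in>S. s0 \<le> t \<and> t \<le> s1 \<and> F s1 - F s0 < \<eta>"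
proof -
  obtain a where a: "F a < \<eta>"
    using order_tendstoD(2)[OF F(2) \<open>0 < \<eta>\<close>] by (auto simp: eventually_at_bot_linorder)
  have "\<forall>\<^sub>F b in at_top. 1 - \<eta> < F b \<and> a < b"
    using order_tendstoD(1)[OF F(3)] \<open>0 < \<eta>\<close> eventually_gt_at_top[of a]
    by (auto intro: eventually_conj)
  then obtain b where b: "1 - \<eta> < F b" "a < b"
    by (auto simp: eventually_at_top_linorder)
  have uc: "uniformly_continuous_on {a..b} F"
    using F(1) by (intro compact_uniformly_continuous) (auto intro: continuous_on_subset)
  obtain S where "finite S" "a \<in> S" "b \<in> S"
    "\<forall>t\<in>{a..<b}. \<exists>s0\<in>S. \<exists>s1\<in>S. s0 \<le> t \<and> t \<le> s1 \<and> F s1 - F s0 < \<eta>"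
    by (rule uniform_grid_bracketing[OF uc b(2) \<open>0 < \<eta>\<close>])
  with a b(1) show thesis
    by (intro that) auto
qed

lemma uniform_approx_from_finite_grid:
  fixes F :: "real \<Rightarrow> real"
  assumes F: "mono F" "continuous_on UNIV F" "(F \<longlongrightarrow> 0) at_bot" "(F \<longlongrightarrow> 1) at_top"
    and "0 < \<eta>"
  obtains S where "finite S"
    "\<And>g t. mono g \<Longrightarrow> (\<And>t. 0 \<le> g t \<and> g t \<le> 1) \<Longrightarrow> (\<And>s. s \<in> S \<Longrightarrow> \<bar>g s - F s\<bar> \<le> \<eta>)
      \<Longrightarrow> \<bar>g t - F t\<bar> \<le> 2 * \<eta>"
proof -
  obtain S a b where "finite S" "a \<in> S" "b \<in> S" "F a < \<eta>" "1 - \<eta> < F b"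
    and bracket: "\<forall>t\<in>{a..<b}. \<exists>s0\<in>S. \<exists>s1\<in>S. s0 \<le> t \<and> t \<le> s1 \<and> F s1 - F s0 < \<eta>"
    using finite_bracketing_grid[OF F(2-4) \<open>0 < \<eta>\<close>] by blast
  show thesis
  proof (rule that[OF \<open>finite S\<close>])
    fix g t
    assume g: "mono g" "\<And>t. 0 \<le> g t \<and> g t \<le> 1"
      and close: "\<And>s. s \<in> S \<Longrightarrow> \<bar>g s - F s\<bar> \<le> \<eta>"
    have F01: "0 \<le> F t \<and> F t \<le> 1"
      using F(1,3,4) by (rule mono_tendsto_bounds)
    consider "t < a" | "b \<le> t" | "a \<le> t" "t < b"
      by linarith
    then show "\<bar>g t - F t\<bar> \<le> 2 * \<eta>"
    proof cases
      case 1
      then have "g t \<le> g a" "F t \<le> F a"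
        using g(1) F(1) by (simp_all add: monoD)
      then show ?thesis
        using close[OF \<open>a \<in> S\<close>] \<open>F a < \<eta>\<close> g(2)[of t] F01 by (simp add: abs_le_iff)
    next
      case 2
      then have "g b \<le> g t" "F b \<le> F t"
        using g(1) F(1) by (simp_all add: monoD)
      then show ?thesis
        using close[OF \<open>b \<in> S\<close>] \<open>1 - \<eta> < F b\<close> g(2)[of t] F01 by (simp add: abs_le_iff)
    next
      case 3
      then obtain s0 s1 where "s0 \<in> S" "s1 \<in> S" "s0 \<le> t" "t \<le> s1" "F s1 - F s0 < \<eta>"
        using bracket by (meson atLeastLessThan_iff)
      moreover from this have "g s0 \<le> g t" "g t \<le> g s1" "F s0 \<le> F t" "F t \<le> F s1"
        using g(1) F(1) by (simp_all add: monoD)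
      ultimately show ?thesis
        using close[of s0] close[of s1] by (simp add: abs_le_iff)
    qed
  qed
qed

section \<open>Empirical distribution functions of perturbed samples\<close>

lemma asymp_null_ecdf_perturbed:
  fixes F :: "real \<Rightarrow> real" and r \<rho> d :: "nat \<Rightarrow> 'a \<Rightarrow> nat \<Rightarrow> real"
  assumes F: "continuous_on UNIV F"
    and close: "\<And>n \<omega> i. \<bar>r n \<omega> i - \<rho> n \<omega> i\<bar> \<le> d n \<omega> i"
    and \<rho>: "\<And>s \<eta>. 0 < \<eta> \<Longrightarrow> asymp_null P (\<lambda>n \<omega>. \<eta> \<le> \<bar>ecdf n (\<rho> n \<omega>) s - F s\<bar>)"
    and d: "\<And>e \<eta>. 0 < e \<Longrightarrow> 0 < \<eta> \<Longrightarrow>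
      asymp_null P (\<lambda>n \<omega>. \<eta> * real n \<le> card {i. i < n \<and> e < d n \<omega> i})"
    and "0 < \<eta>"
  shows "asymp_null P (\<lambda>n \<omega>. \<eta> < \<bar>ecdf n (r n \<omega>) s - F s\<bar>)"
proof -
  obtain \<delta> where "0 < \<delta>" and \<delta>: "\<And>t. dist t s < \<delta> \<Longrightarrow> dist (F t) (F s) < \<eta> / 6"
    using F \<open>0 < \<eta>\<close> unfolding continuous_on_iff by (metis UNIV_I divide_pos_pos zero_less_numeral)
  define e where "e = \<delta> / 2"
  have "0 < e" "\<bar>F (s + e) - F s\<bar> < \<eta> / 6" "\<bar>F (s - e) - F s\<bar> < \<eta> / 6"
    using \<open>0 < \<delta>\<close> \<delta>[of "s + e"] \<delta>[of "s - e"] unfolding e_def by (simp_all add: dist_real_def)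
  have "asymp_null P (\<lambda>n \<omega>. \<eta> / 6 \<le> \<bar>ecdf n (\<rho> n \<omega>) (s + e) - F (s + e)\<bar>
      \<or> \<eta> / 6 \<le> \<bar>ecdf n (\<rho> n \<omega>) (s - e) - F (s - e)\<bar>
      \<or> \<eta> / 3 * n \<le> card {i. i < n \<and> e < d n \<omega> i})"
    using \<open>0 < \<eta>\<close> \<open>0 < e\<close> by (intro asymp_null_disj \<rho> d) simp_all
  then show ?thesis
  proof (rule asymp_null_mono)
    show "\<forall>\<^sub>F n in sequentially. \<forall>\<omega> \<in> space (P n). \<eta> < \<bar>ecdf n (r n \<omega>) s - F s\<bar> \<longrightarrow>
        \<eta> / 6 \<le> \<bar>ecdf n (\<rho> n \<omega>) (s + e) - F (s + e)\<bar>
      \<or> \<eta> / 6 \<le> \<bar>ecdf n (\<rho> n \<omega>) (s - e) - F (s - e)\<bar>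
      \<or> \<eta> / 3 * n \<le> card {i. i < n \<and> e < d n \<omega> i}"
      using eventually_gt_at_top[of 0]
    proof eventually_elim
      case (elim n)
      show ?case
      proof (intro ballI impI, rule ccontr)
        fix \<omega>
        assume gt: "\<eta> < \<bar>ecdf n (r n \<omega>) s - F s\<bar>"
          and "\<not> (\<eta> / 6 \<le> \<bar>ecdf n (\<rho> n \<omega>) (s + e) - F (s + e)\<bar>
            \<or> \<eta> / 6 \<le> \<bar>ecdf n (\<rho> n \<omega>) (s - e) - F (s - e)\<bar>
            \<or> \<eta> / 3 * n \<le> card {i. i < n \<and> e < d n \<omega> i})"
        then have "\<bar>ecdf n (\<rho> n \<omega>) (s + e) - F (s + e)\<bar> < \<eta> / 6"
          and "\<bar>ecdf n (\<rho> n \<omega>) (s - e) - F (s - e)\<bar> < \<eta> / 6"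
          and "card {i. i < n \<and> e < d n \<omega> i} / n < \<eta> / 3"
          using elim by (auto simp: divide_less_eq)
        then show False
          using gt abs_ecdf_perturb_le[of "r n \<omega>" "\<rho> n \<omega>" "d n \<omega>" n s F e, OF close]
            \<open>\<bar>F (s + e) - F s\<bar> < \<eta> / 6\<close> \<open>\<bar>F (s - e) - F s\<bar> < \<eta> / 6\<close>
          by linarith
      qed
    qed
  qed
qed

lemma asymp_null_sup_ecdf_perturbed:
  fixes F :: "real \<Rightarrow> real" and r \<rho> d :: "nat \<Rightarrow> 'a \<Rightarrow> nat \<Rightarrow> real"
  assumes F: "mono F" "continuous_on UNIV F" "(F \<longlongrightarrow> 0) at_bot" "(F \<longlongrightarrow> 1) at_top"
    and close: "\<And>n \<omega> i. \<bar>r n \<omega> i - \<rho> n \<omega> i\<bar> \<le> d n \<omega> i"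
    and \<rho>: "\<And>s \<eta>. 0 < \<eta> \<Longrightarrow> asymp_null P (\<lambda>n \<omega>. \<eta> \<le> \<bar>ecdf n (\<rho> n \<omega>) s - F s\<bar>)"
    and d: "\<And>e \<eta>. 0 < e \<Longrightarrow> 0 < \<eta> \<Longrightarrow>
      asymp_null P (\<lambda>n \<omega>. \<eta> * real n \<le> card {i. i < n \<and> e < d n \<omega> i})"
    and "0 < \<eta>"
  shows "asymp_null P (\<lambda>n \<omega>. \<eta> < \<bar>SUP t. \<bar>ecdf n (r n \<omega>) t - F t\<bar>\<bar>)"
proof -
  obtain S where "finite S" and grid: "\<And>g t. mono g \<Longrightarrow> (\<And>t. 0 \<le> g t \<and> g t \<le> 1)
      \<Longrightarrow> (\<And>s. s \<in> S \<Longrightarrow> \<bar>g s - F s\<bar> \<le> \<eta> / 2) \<Longrightarrow> \<bar>g t - F t\<bar> \<le> 2 * (\<eta> / 2)"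
    using uniform_approx_from_finite_grid[OF F, of "\<eta> / 2"] \<open>0 < \<eta>\<close> by auto
  have F01: "\<And>t. 0 \<le> F t \<and> F t \<le> 1"
    using F(1,3,4) by (rule mono_tendsto_bounds)
  have "asymp_null P (\<lambda>n \<omega>. \<exists>s\<in>S. \<eta> / 2 < \<bar>ecdf n (r n \<omega>) s - F s\<bar>)"
    using \<open>finite S\<close> \<open>0 < \<eta>\<close>
    by (intro asymp_null_Bex asymp_null_ecdf_perturbed[OF F(2) close \<rho> d]) simp_all
  then show ?thesis
  proof (rule asymp_null_mono)
    show "\<forall>\<^sub>F n in sequentially. \<forall>\<omega> \<in> space (P n). \<eta> < \<bar>SUP t. \<bar>ecdf n (r n \<omega>) t - F t\<bar>\<bar>
        \<longrightarrow> (\<exists>s\<in>S. \<eta> / 2 < \<bar>ecdf n (r n \<omega>) s - F s\<bar>)"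
    proof (intro always_eventually allI ballI impI, rule ccontr)
      fix n \<omega>
      let ?g = "ecdf n (r n \<omega>)"
      assume gt: "\<eta> < \<bar>SUP t. \<bar>?g t - F t\<bar>\<bar>" and "\<not> (\<exists>s\<in>S. \<eta> / 2 < \<bar>?g s - F s\<bar>)"
      then have "\<bar>?g t - F t\<bar> \<le> \<eta>" for t
        using grid[of ?g t] mono_ecdf ecdf_nonneg ecdf_le_1 by (simp add: not_less)
      then have "(SUP t. \<bar>?g t - F t\<bar>) \<le> \<eta>"
        by (intro cSUP_least) auto
      moreover have "\<bar>?g 0 - F 0\<bar> \<le> (SUP t. \<bar>?g t - F t\<bar>)"
        by (rule cSUP_upper[OF UNIV_I bdd_above_abs_ecdf_diff[OF F01]])
      ultimately show False
        using gt by linarith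
    qed
  qed
qed

lemma asymp_null_abs_quantile_ecdf:
  fixes F :: "real \<Rightarrow> real"
  assumes F: "continuous_on UNIV F" "\<And>t. 0 \<le> F t \<and> F t \<le> 1" and "0 < p" "p \<le> 1"
    and sup: "asymp_null P (\<lambda>n \<omega>. \<eta> < \<bar>SUP t. \<bar>ecdf n (r n \<omega>) t - F t\<bar>\<bar>)"
  shows "asymp_null P (\<lambda>n \<omega>. \<eta> < \<bar>F (quantile (ecdf n (r n \<omega>)) p) - p\<bar>)"
  using sup
proof (rule asymp_null_mono)
  show "\<forall>\<^sub>F n in sequentially. \<forall>\<omega> \<in> space (P n). \<eta> < \<bar>F (quantile (ecdf n (r n \<omega>)) p) - p\<bar>
      \<longrightarrow> \<eta> < \<bar>SUP t. \<bar>ecdf n (r n \<omega>) t - F t\<bar>\<bar>"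
    using eventually_gt_at_top[of 0]
  proof (eventually_elim, intro ballI impI)
    fix n \<omega>
    assume "0 < n" and gt: "\<eta> < \<bar>F (quantile (ecdf n (r n \<omega>)) p) - p\<bar>"
    have "\<bar>ecdf n (r n \<omega>) t - F t\<bar> \<le> (SUP t. \<bar>ecdf n (r n \<omega>) t - F t\<bar>)" for t
      using F(2) by (intro cSUP_upper bdd_above_abs_ecdf_diff) auto
    then have "\<bar>F (quantile (ecdf n (r n \<omega>)) p) - p\<bar> \<le> (SUP t. \<bar>ecdf n (r n \<omega>) t - F t\<bar>)"
      by (rule abs_quantile_ecdf_le[OF F(1) \<open>0 < n\<close> assms(3,4)])
    then show "\<eta> < \<bar>SUP t. \<bar>ecdf n (r n \<omega>) t - F t\<bar>\<bar>"
      using gt by linarith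
  qed
qed

section \<open>Counting and concentration inequalities\<close>

lemma borel_measurable_card_Collect:
  fixes n :: nat
  assumes "\<And>i. i < n \<Longrightarrow> {\<omega> \<in> space M. P i \<omega>} \<in> sets M"
  shows "(\<lambda>\<omega>. real (card {i. i < n \<and> P i \<omega>})) \<in> borel_measurable M"
proof -
  have "(\<lambda>\<omega>. \<Sum>i<n. indicator {\<omega> \<in> space M. P i \<omega>} \<omega> :: real) \<in> borel_measurable M"
    using assms by (intro borel_measurable_sum) auto
  moreover have "real (card {i. i < n \<and> P i \<omega>}) = (\<Sum>i<n. indicator {\<omega> \<in> space M. P i \<omega>} \<omega>)"
    if "\<omega> \<in> space M" for \<omega>
    using that by (simp add: indicator_def sum.If_cases Int_def conj_commute)
  ultimately show ?thesis
    by (simp cong: measurable_cong)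
qed

lemma (in prob_space) prob_card_ge_le:
  fixes c d :: real
  assumes "0 < n" "0 < d" "\<And>i. i < n \<Longrightarrow> A i \<in> events" "\<And>i. i < n \<Longrightarrow> prob (A i) \<le> c"
  shows "prob {\<omega> \<in> space M. d * real n \<le> card {i. i < n \<and> \<omega> \<in> A i}} \<le> c / d"
proof -
  define u where "u \<omega> = (\<Sum>i<n. indicator (A i) \<omega> :: real)" for \<omega>
  have card_eq: "real (card {i. i < n \<and> \<omega> \<in> A i}) = u \<omega>" for \<omega>
    unfolding u_def by (simp add: indicator_def sum.If_cases Int_def conj_commute)
  have ind: "integrable M (indicator (A i) :: 'a \<Rightarrow> real)" if "i < n" for i
    using assms(3)[OF that] by (simp add: integrable_indicator_iff sets.Int_space_eq2 less_top[symmetric])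
  then have u: "integrable M u"
    unfolding u_def by (intro Bochner_Integration.integrable_sum) auto
  have "(\<integral>\<omega>. u \<omega> \<partial>M) = (\<Sum>i<n. prob (A i))"
    unfolding u_def using assms(3) ind by (subst Bochner_Integration.integral_sum) auto
  also have "\<dots> \<le> n * c"
    using sum_mono[of "{..<n}" "\<lambda>i. prob (A i)" "\<lambda>_. c"] assms(4) by simp
  finally have "(\<integral>\<omega>. u \<omega> \<partial>M) / (d * n) \<le> c / d"
    using assms(1,2) by (simp add: field_simps)
  moreover have "prob {\<omega> \<in> space M. d * n \<le> u \<omega>} \<le> (\<integral>\<omega>. u \<omega> \<partial>M) / (d * n)"
    using u assms(1,2) by (intro integral_Markov_inequality_measure[where A = "space M"])
      (auto simp: u_def[abs_def] intro!: sum_nonneg)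
  ultimately show ?thesis
    unfolding card_eq by linarith
qed

lemma indep_vars_PiM_components:
  assumes "\<And>i. i \<in> I \<Longrightarrow> prob_space (M i)" "finite I" "I \<noteq> {}"
  shows "prob_space.indep_vars (PiM I M) M (\<lambda>i x. x i) I"
proof -
  interpret prob_space "PiM I M"
    using assms by (intro prob_space_PiM) auto
  have "distr (PiM I M) (PiM I M) (\<lambda>x. \<lambda>i\<in>I. x i) = distr (PiM I M) (PiM I M) (\<lambda>x. x)"
    by (rule distr_cong) (auto simp: space_PiM PiE_def extensional_restrict)
  also have "\<dots> = PiM I (\<lambda>i. distr (PiM I M) (M i) (\<lambda>x. x i))"
    using assms by (auto intro!: PiM_cong distr_PiM_component[symmetric])
  finally show ?thesis
    using assms by (subst indep_vars_iff_distr_eq_PiM') auto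
qed

lemma prob_ecdf_deviation_ge:
  fixes f :: "'a \<Rightarrow> real"
  assumes M: "prob_space M" and f[measurable]: "f \<in> borel_measurable M" and "0 < n" "0 < \<eta>"
  defines "A \<equiv> PiM {..<n} (\<lambda>_. M)"
  shows "measure A {x \<in> space A. \<eta> \<le> \<bar>ecdf n (\<lambda>i. f (x i)) s - measure M {y \<in> space M. f y \<le> s}\<bar>}
    \<le> 2 * exp (- 2 * real n * \<eta>\<^sup>2)"
proof -
  interpret A: prob_space A
    unfolding A_def using M by (intro prob_space_PiM) auto
  define X where "X = (\<lambda>i (x :: nat \<Rightarrow> 'a). indicator {y \<in> space M. f y \<le> s} (x i) :: real)"
  have "A.indep_vars (\<lambda>_. M) (\<lambda>i x. x i) {..<n}"
    unfolding A_def using M \<open>0 < n\<close> by (intro indep_vars_PiM_components) auto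
  then have "A.indep_vars (\<lambda>_. borel) X {..<n}"
    unfolding X_def by (rule A.indep_vars_compose2) measurable
  then interpret H: Hoeffding_ineq A "{..<n}" X "\<lambda>_. 0" "\<lambda>_. 1" "\<Sum>i<n. A.expectation (X i)"
    by unfold_locales (simp_all add: X_def indicator_def)
  have "A.expectation (X i) = measure M {y \<in> space M. f y \<le> s}" if "i < n" for i
  proof -
    have "A.expectation (X i) = (\<integral>y. indicator {y \<in> space M. f y \<le> s} y \<partial>distr A M (\<lambda>x. x i))"
      unfolding X_def A_def using that by (subst integral_distr) auto
    also have "distr A M (\<lambda>x. x i) = M"
      unfolding A_def using M that by (intro distr_PiM_component) auto
    finally show ?thesis
      by (simp add: less_top[symmetric])
  qed
  then have \<mu>: "(\<Sum>i<n. A.expectation (X i)) = n * measure M {y \<in> space M. f y \<le> s}"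
    by simp
  have ecdf_eq: "n * ecdf n (\<lambda>i. f (x i)) s = (\<Sum>i<n. X i x)" if "x \<in> space A" for x
    using \<open>0 < n\<close> that unfolding ecdf_def X_def A_def
    by (simp add: indicator_def sum.If_cases Int_def conj_commute space_PiM PiE_iff)
  have "{x \<in> space A. \<eta> \<le> \<bar>ecdf n (\<lambda>i. f (x i)) s - measure M {y \<in> space M. f y \<le> s}\<bar>}
      = {x \<in> space A. n * \<eta> \<le> \<bar>(\<Sum>i<n. X i x) - (\<Sum>i<n. A.expectation (X i))\<bar>}"
    using \<open>0 < n\<close> by (auto simp: \<mu> ecdf_eq[symmetric] right_diff_distrib[symmetric] abs_mult)
  also have "A.prob \<dots> \<le> 2 * exp (-2 * (n * \<eta>)\<^sup>2 / (\<Sum>i<n. (1 - 0)\<^sup>2))"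
    using \<open>0 < n\<close> \<open>0 < \<eta>\<close> by (intro H.Hoeffding_ineq_abs_ge) auto
  also have "-2 * (n * \<eta>)\<^sup>2 / (\<Sum>i<n. (1 - 0)\<^sup>2) = - 2 * real n * \<eta>\<^sup>2"
    using \<open>0 < n\<close> by (simp add: power2_eq_square)
  finally show ?thesis .
qed

lemma measure_pair_fst_event:
  assumes "prob_space N" "S \<in> sets M"
  shows "measure (M \<Otimes>\<^sub>M N) {\<omega> \<in> space (M \<Otimes>\<^sub>M N). fst \<omega> \<in> S} = measure M S"
proof -
  interpret N: prob_space N by fact
  have "measure M S = measure (distr (M \<Otimes>\<^sub>M N) M fst) S"
    by (simp add: N.distr_pair_fst)
  also have "\<dots> = measure (M \<Otimes>\<^sub>M N) (fst -` S \<inter> space (M \<Otimes>\<^sub>M N))"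
    using assms(2) by (intro measure_distr) auto
  finally show ?thesis
    by (simp add: Int_def conj_commute)
qed

lemma distr_pair_pmf_invariant:
  assumes "map_pmf f p = p" "prob_space N"
  shows "distr (measure_pmf p \<Otimes>\<^sub>M N) (measure_pmf p \<Otimes>\<^sub>M N) (\<lambda>(x, y). (f x, y)) = measure_pmf p \<Otimes>\<^sub>M N"
proof -
  have "distr (measure_pmf p) (measure_pmf p) f = measure_pmf p"
    using assms(1) by (metis distr_cong map_pmf_rep_eq sets_measure_pmf_count_space)
  moreover have "distr (measure_pmf p) (measure_pmf p) f \<Otimes>\<^sub>M distr N N id
      = distr (measure_pmf p \<Otimes>\<^sub>M N) (measure_pmf p \<Otimes>\<^sub>M N) (\<lambda>(x, y). (f x, id y))"
    using assms(2) by (intro pair_measure_distr) (auto simp: id_def prob_space_imp_sigma_finite)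
  ultimately show ?thesis
    by (simp add: id_def)
qed

section \<open>Out-of-bag errors\<close>

lemma prob_space_bag_space:
  assumes "prob_space G" "prob_space (\<Theta> n)"
  shows "prob_space (bag_space G B rs \<Theta> n)"
  unfolding bag_space_def using assms
  by (intro prob_space_pair prob_space_PiM) (auto simp: prob_space_measure_pmf)

definition relabel_obs :: "(nat \<Rightarrow> nat) \<Rightarrow> nat \<Rightarrow> nat \<Rightarrow> (nat \<Rightarrow> 'a) \<times> (nat \<Rightarrow> nat list \<times> 't)
    \<Rightarrow> (nat \<Rightarrow> 'a) \<times> (nat \<Rightarrow> nat list \<times> 't)" where
  "relabel_obs \<pi> n k \<omega> =
     (\<lambda>j\<in>{..<n}. fst \<omega> (\<pi> j), \<lambda>b\<in>{..<k}. (map \<pi> (fst (snd \<omega> b)), snd (snd \<omega> b)))"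

lemma relabel_obs_measure_preserving:
  fixes G :: "('a \<times> 'b) measure" and B :: "nat \<Rightarrow> nat" and rs :: "nat \<Rightarrow> nat list pmf"
    and \<Theta> :: "nat \<Rightarrow> 't measure"
  assumes G: "prob_space G" and \<Theta>: "prob_space (\<Theta> n)"
    and \<pi>: "bij_betw \<pi> {..<n} {..<n}" and rs: "map_pmf (map \<pi>) (rs n) = rs n"
  defines "P \<equiv> bag_space G B rs \<Theta> n"
  shows "relabel_obs \<pi> n (B n) \<in> P \<rightarrow>\<^sub>M P" and "distr P P (relabel_obs \<pi> n (B n)) = P"
proof -
  define A where "A = PiM {..<n} (\<lambda>_. G)"
  define R where "R = measure_pmf (rs n) \<Otimes>\<^sub>M \<Theta> n"
  define C where "C = PiM {..<B n} (\<lambda>_. R)"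
  define f where "f x = (\<lambda>j\<in>{..<n}. x (\<pi> j))" for x :: "nat \<Rightarrow> 'a \<times> 'b"
  define h where "h = (\<lambda>(l, t). (map \<pi> l, t :: 't))"
  have relabel: "relabel_obs \<pi> n (B n) = (\<lambda>(x, y). (f x, compose {..<B n} h y))"
    by (auto simp: fun_eq_iff relabel_obs_def f_def h_def compose_def split_beta')
  have P: "P = A \<Otimes>\<^sub>M C"
    unfolding P_def A_def C_def R_def bag_space_def ..
  have \<pi>_range: "j < n \<Longrightarrow> \<pi> j < n" for j
    using bij_betw_apply[OF \<pi>] by simp
  have prob_R: "prob_space R"
    unfolding R_def using \<Theta> by (intro prob_space_pair) (auto simp: prob_space_measure_pmf)
  have f: "f \<in> A \<rightarrow>\<^sub>M A"
    unfolding f_def A_def by measurable (simp add: \<pi>_range)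
  have h: "h \<in> R \<rightarrow>\<^sub>M R"
    unfolding h_def R_def by (auto intro!: measurable_Pair simp: split_beta')
  have g: "compose {..<B n} h \<in> C \<rightarrow>\<^sub>M C"
    unfolding C_def compose_def using h by measurable
  have "distr A A f = A"
    using distr_PiM_reindex[of "{..<n}" "\<lambda>_. G" \<pi> "{..<n}"] G \<pi>
    unfolding A_def f_def by (auto simp: bij_betw_def)
  moreover have distr_g: "distr C C (compose {..<B n} h) = C"
  proof -
    have "distr R R h = R"
      unfolding R_def h_def using rs \<Theta> by (rule distr_pair_pmf_invariant)
    then show ?thesis
      unfolding C_def using prob_R h by (simp add: distr_PiM_finite_prob_space')
  qed
  moreover have "distr A A f \<Otimes>\<^sub>M distr C C (compose {..<B n} h)
      = distr (A \<Otimes>\<^sub>M C) (A \<Otimes>\<^sub>M C) (\<lambda>(x, y). (f x, compose {..<B n} h y))"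
  proof (rule pair_measure_distr[OF f g])
    show "sigma_finite_measure (distr C C (compose {..<B n} h))"
      unfolding distr_g using prob_R by (auto simp: C_def intro!: prob_space_imp_sigma_finite prob_space_PiM)
  qed
  ultimately show "distr P P (relabel_obs \<pi> n (B n)) = P"
    unfolding P relabel by simp
  show "relabel_obs \<pi> n (B n) \<in> P \<rightarrow>\<^sub>M P"
    unfolding P relabel using f g by measurable
qed

lemma oob_relabel_obs:
  assumes inv: "\<And>j. \<pi> (\<pi> j) = j" and range: "\<And>j. j < n \<Longrightarrow> \<pi> j < n"
    and \<omega>: "\<omega> \<in> space (bag_space G B rs \<Theta> n)"
  shows "fst (relabel_obs \<pi> n (B n) \<omega>) (\<pi> i) = fst \<omega> i"
    and "oob base agg B n (relabel_obs \<pi> n (B n) \<omega>) (\<pi> i) = oob base agg B n \<omega> i"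
proof -
  \<comment> \<open>resamples may contain indices outside \<open>{..<n}\<close>, where both sides are \<open>undefined\<close>\<close>
  have "fst \<omega> j = undefined" if "\<not> j < n" for j
    using \<omega> that by (auto simp: bag_space_def space_pair_measure space_PiM PiE_def extensional_def)
  moreover have "j < n \<longleftrightarrow> \<pi> j < n" for j
    using range inv by metis
  ultimately have fst_relabel: "fst (relabel_obs \<pi> n (B n) \<omega>) = fst \<omega> \<circ> \<pi>"
    by (auto simp: relabel_obs_def fun_eq_iff)
  then show "fst (relabel_obs \<pi> n (B n) \<omega>) (\<pi> i) = fst \<omega> i"
    by (simp add: inv)
  have "\<pi> i \<in> set (map \<pi> l) \<longleftrightarrow> i \<in> set l" for l
    using inv by (metis image_iff list.set_map)
  moreover have "fst \<omega> \<circ> \<pi> \<circ> \<pi> = fst \<omega>"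
    by (simp add: inv fun_eq_iff)
  moreover have "snd (relabel_obs \<pi> n (B n) \<omega>) b = (map \<pi> (fst (snd \<omega> b)), snd (snd \<omega> b))"
    if "b < B n" for b
    using that by (simp add: relabel_obs_def)
  ultimately show "oob base agg B n (relabel_obs \<pi> n (B n) \<omega>) (\<pi> i) = oob base agg B n \<omega> i"
    unfolding oob_def fst_relabel
    by (intro arg_cong[where f = "agg n"] arg_cong[where f = concat] map_cong) auto
qed

lemma measure_oob_event_exchangeable:
  fixes G :: "('a \<times> 'b) measure" and B :: "nat \<Rightarrow> nat" and rs :: "nat \<Rightarrow> nat list pmf"
    and \<Theta> :: "nat \<Rightarrow> 't measure"
  assumes G: "prob_space G" and \<Theta>: "prob_space (\<Theta> n)"
    and rs: "\<And>\<pi>. bij_betw \<pi> {..<n} {..<n} \<Longrightarrow> map_pmf (map \<pi>) (rs n) = rs n" and "i < n"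
  defines "P \<equiv> bag_space G B rs \<Theta> n"
  assumes Q: "{\<omega> \<in> space P. Q (fst \<omega> 0) (oob base agg B n \<omega> 0)} \<in> sets P"
  shows "measure P {\<omega> \<in> space P. Q (fst \<omega> i) (oob base agg B n \<omega> i)}
    = measure P {\<omega> \<in> space P. Q (fst \<omega> 0) (oob base agg B n \<omega> 0)}"
proof -
  define \<pi> where "\<pi> = Transposition.transpose 0 i"
  define T :: "_ \<Rightarrow> (nat \<Rightarrow> 'a \<times> 'b) \<times> (nat \<Rightarrow> nat list \<times> 't)" where "T = relabel_obs \<pi> n (B n)"
  have \<pi>: "bij_betw \<pi> {..<n} {..<n}" "\<And>j. \<pi> (\<pi> j) = j" "\<And>j. j < n \<Longrightarrow> \<pi> j < n" "\<pi> i = 0"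
    using \<open>i < n\<close> by (auto simp: \<pi>_def Transposition.transpose_def)
  have T: "T \<in> P \<rightarrow>\<^sub>M P" "distr P P T = P"
    unfolding T_def P_def
    using relabel_obs_measure_preserving[where G = G and \<Theta> = \<Theta> and n = n and \<pi> = \<pi> and rs = rs and B = B]
      G \<Theta> \<pi>(1) rs[OF \<pi>(1)] by auto
  have T_swap: "fst (T \<omega>) 0 = fst \<omega> i" "oob base agg B n (T \<omega>) 0 = oob base agg B n \<omega> i"
    if "\<omega> \<in> space P" for \<omega>
    using oob_relabel_obs[OF \<pi>(2,3), where \<omega> = \<omega> and G = G and B = B and rs = rs and \<Theta> = \<Theta> and i = i]
      that unfolding T_def P_def \<pi>(4) by simp_all
  have "measure P {\<omega> \<in> space P. Q (fst \<omega> 0) (oob base agg B n \<omega> 0)}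
      = measure (distr P P T) {\<omega> \<in> space P. Q (fst \<omega> 0) (oob base agg B n \<omega> 0)}"
    by (simp only: T(2))
  also have "\<dots> = measure P (T -` {\<omega> \<in> space P. Q (fst \<omega> 0) (oob base agg B n \<omega> 0)} \<inter> space P)"
    using T(1) Q by (rule measure_distr)
  also have "T -` {\<omega> \<in> space P. Q (fst \<omega> 0) (oob base agg B n \<omega> 0)} \<inter> space P
      = {\<omega> \<in> space P. Q (fst \<omega> i) (oob base agg B n \<omega> i)}"
    using T_swap measurable_space[OF T(1)] by auto
  finally show ?thesis ..
qed

definition oob_err :: "('x \<Rightarrow> 'y::metric_space) \<Rightarrow> (nat \<Rightarrow> ('x \<times> 'y) list \<Rightarrow> 't \<Rightarrow> 'e)
    \<Rightarrow> (nat \<Rightarrow> 'e list \<Rightarrow> 'x \<Rightarrow> 'y) \<Rightarrow> (nat \<Rightarrow> nat) \<Rightarrow> nat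
    \<Rightarrow> (nat \<Rightarrow> 'x \<times> 'y) \<times> (nat \<Rightarrow> nat list \<times> 't) \<Rightarrow> nat \<Rightarrow> real" where
  "oob_err m base agg B n \<omega> i = dist (m (fst (fst \<omega> i))) (oob base agg B n \<omega> i (fst (fst \<omega> i)))"

lemma abs_oob_res_diff_le:
  "\<bar>oob_res base agg B n \<omega> i - dist (snd (fst \<omega> i)) (m (fst (fst \<omega> i)))\<bar> \<le> oob_err m base agg B n \<omega> i"
  unfolding oob_res_def oob_err_def by (metis abs_dist_diff_le dist_commute)

lemma asymp_null_oob_err_fraction:
  fixes G :: "('x \<times> 'y::metric_space) measure" and \<Theta> :: "nat \<Rightarrow> 't measure"
  assumes G: "prob_space G" and \<Theta>: "\<And>n. prob_space (\<Theta> n)"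
    and rs: "\<And>n \<pi>. bij_betw \<pi> {..<n} {..<n} \<Longrightarrow> map_pmf (map \<pi>) (rs n) = rs n"
    and meas: "\<And>n i. i < n \<Longrightarrow> (\<lambda>\<omega>. oob_err m base agg B n \<omega> i) \<in> borel_measurable (bag_space G B rs \<Theta> n)"
    and consistent: "to_zero_in_prob (bag_space G B rs \<Theta>) (\<lambda>n \<omega>. oob_err m base agg B n \<omega> 0)"
    and "0 < e" "0 < \<eta>"
  shows "asymp_null (bag_space G B rs \<Theta>)
    (\<lambda>n \<omega>. \<eta> * real n \<le> card {i. i < n \<and> e < oob_err m base agg B n \<omega> i})"
proof (rule asymp_nullI)
  let ?P = "bag_space G B rs \<Theta>"
  define E where "E n i = {\<omega> \<in> space (?P n). e < oob_err m base agg B n \<omega> i}" for n i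
  have E: "E n i \<in> sets (?P n)" if "i < n" for n i
    unfolding E_def using meas[OF that] by measurable
  show "\<forall>\<^sub>F n in sequentially.
      {\<omega> \<in> space (?P n). \<eta> * real n \<le> card {i. i < n \<and> e < oob_err m base agg B n \<omega> i}} \<in> sets (?P n)"
  proof (intro always_eventually allI)
    fix n
    have "(\<lambda>\<omega>. real (card {i. i < n \<and> e < oob_err m base agg B n \<omega> i})) \<in> borel_measurable (?P n)"
      by (rule borel_measurable_card_Collect) (use E in \<open>simp add: E_def\<close>)
    then show "{\<omega> \<in> space (?P n). \<eta> * real n \<le> card {i. i < n \<and> e < oob_err m base agg B n \<omega> i}}
        \<in> sets (?P n)"
      by measurable
  qed
  show "\<forall>\<^sub>F n in sequentially. measure (?P n)
      {\<omega> \<in> space (?P n). \<eta> * real n \<le> card {i. i < n \<and> e < oob_err m base agg B n \<omega> i}}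
    \<le> measure (?P n) (E n 0) / \<eta>"
    using eventually_gt_at_top[of 0]
  proof eventually_elim
    case (elim n)
    interpret prob_space "?P n"
      using G \<Theta> by (rule prob_space_bag_space)
    have "prob {\<omega> \<in> space (?P n). \<eta> * real n \<le> card {i. i < n \<and> \<omega> \<in> E n i}} \<le> prob (E n 0) / \<eta>"
    proof (rule prob_card_ge_le[OF elim \<open>0 < \<eta>\<close> E])
      show "prob (E n i) \<le> prob (E n 0)" if "i < n" for i
        unfolding E_def oob_err_def using E[OF elim] that
        by (intro eq_refl measure_oob_event_exchangeable[OF G \<Theta> rs]) (simp_all add: E_def oob_err_def)
    qed
    moreover have "card {i. i < n \<and> e < oob_err m base agg B n \<omega> i} = card {i. i < n \<and> \<omega> \<in> E n i}"
      if "\<omega> \<in> space (?P n)" for \<omega>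
      using that unfolding E_def by simp
    then have "{\<omega> \<in> space (?P n). \<eta> * real n \<le> card {i. i < n \<and> e < oob_err m base agg B n \<omega> i}}
      = {\<omega> \<in> space (?P n). \<eta> * real n \<le> card {i. i < n \<and> \<omega> \<in> E n i}}"
      by auto
    ultimately show ?case
      by simp
  qed
  show "(\<lambda>n. measure (?P n) (E n 0) / \<eta>) \<longlonglongrightarrow> 0"
    using consistent \<open>0 < e\<close> unfolding to_zero_in_prob_def E_def
    by (intro tendsto_divide_zero) (simp add: oob_err_def)
qed

lemma asymp_null_ecdf_sample:
  fixes G :: "('a \<times> 'b) measure" and \<Theta> :: "nat \<Rightarrow> 't measure"
  assumes G: "prob_space G" and \<Theta>: "\<And>n. prob_space (\<Theta> n)"
    and f[measurable]: "f \<in> borel_measurable G" and "0 < \<eta>"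
  shows "asymp_null (bag_space G B rs \<Theta>)
    (\<lambda>n \<omega>. \<eta> \<le> \<bar>ecdf n (\<lambda>i. f (fst \<omega> i)) s - measure G {p \<in> space G. f p \<le> s}\<bar>)"
proof (rule asymp_nullI)
  define A where "A n = PiM {..<n} (\<lambda>_. G)" for n :: nat
  define C where "C n = PiM {..<B n} (\<lambda>_. measure_pmf (rs n) \<Otimes>\<^sub>M \<Theta> n)" for n
  define S where "S n = {x \<in> space (A n). \<eta> \<le> \<bar>ecdf n (\<lambda>i. f (x i)) s - measure G {p \<in> space G. f p \<le> s}\<bar>}"
    for n :: nat
  have P: "bag_space G B rs \<Theta> n = A n \<Otimes>\<^sub>M C n" for n
    unfolding bag_space_def A_def C_def ..
  have "(\<lambda>x. ecdf n (\<lambda>i. f (x i)) s) \<in> borel_measurable (A n)" for n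
    unfolding ecdf_def A_def by (intro borel_measurable_divide borel_measurable_card_Collect) auto
  then have S[measurable]: "S n \<in> sets (A n)" for n
    unfolding S_def by measurable
  have event: "{\<omega> \<in> space (bag_space G B rs \<Theta> n).
      \<eta> \<le> \<bar>ecdf n (\<lambda>i. f (fst \<omega> i)) s - measure G {p \<in> space G. f p \<le> s}\<bar>}
    = {\<omega> \<in> space (A n \<Otimes>\<^sub>M C n). fst \<omega> \<in> S n}" for n
    unfolding P S_def by (auto simp: space_pair_measure)
  show "\<forall>\<^sub>F n in sequentially. {\<omega> \<in> space (bag_space G B rs \<Theta> n).
      \<eta> \<le> \<bar>ecdf n (\<lambda>i. f (fst \<omega> i)) s - measure G {p \<in> space G. f p \<le> s}\<bar>} \<in> sets (bag_space G B rs \<Theta> n)"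
    unfolding event unfolding P by (intro always_eventually allI) measurable
  show "\<forall>\<^sub>F n in sequentially. measure (bag_space G B rs \<Theta> n) {\<omega> \<in> space (bag_space G B rs \<Theta> n).
      \<eta> \<le> \<bar>ecdf n (\<lambda>i. f (fst \<omega> i)) s - measure G {p \<in> space G. f p \<le> s}\<bar>} \<le> 2 * exp (- 2 * real n * \<eta>\<^sup>2)"
    using eventually_gt_at_top[of 0]
  proof eventually_elim
    case (elim n)
    have "prob_space (C n)"
      unfolding C_def using \<Theta> by (intro prob_space_PiM prob_space_pair) (auto simp: prob_space_measure_pmf)
    then have "measure (A n \<Otimes>\<^sub>M C n) {\<omega> \<in> space (A n \<Otimes>\<^sub>M C n). fst \<omega> \<in> S n} = measure (A n) (S n)"
      using S by (rule measure_pair_fst_event)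
    also have "\<dots> \<le> 2 * exp (- 2 * real n * \<eta>\<^sup>2)"
      unfolding S_def A_def by (rule prob_ecdf_deviation_ge[OF G f elim \<open>0 < \<eta>\<close>])
    finally show ?case
      unfolding event unfolding P .
  qed
  have "(\<lambda>n. exp (- 2 * \<eta>\<^sup>2) ^ n) \<longlonglongrightarrow> 0"
    using \<open>0 < \<eta>\<close> by (intro LIMSEQ_power_zero) simp
  then show "(\<lambda>n. 2 * exp (- 2 * real n * \<eta>\<^sup>2)) \<longlonglongrightarrow> 0"
    using tendsto_mult_right_zero[of _ sequentially 2] by (simp add: exp_of_nat_mult[symmetric] mult_ac)
qed

theorem lemma1:
  fixes G :: "('x::metric_space \<times> 'y::metric_space) measure"
    and m :: "'x \<Rightarrow> 'y"
    and B :: "nat \<Rightarrow> nat"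
    and rs :: "nat \<Rightarrow> nat list pmf"
    and \<Theta> :: "nat \<Rightarrow> 't measure"
    and base :: "nat \<Rightarrow> ('x \<times> 'y) list \<Rightarrow> 't \<Rightarrow> 'e"
    and agg :: "nat \<Rightarrow> 'e list \<Rightarrow> 'x \<Rightarrow> 'y"
    and F\<^sub>R :: "real \<Rightarrow> real"
  assumes G: "prob_space G" "sets G = sets (borel \<Otimes>\<^sub>M borel)"
    and m: "cond_frechet_mean G m"
    and Theta: "\<And>n. prob_space (\<Theta> n)"
    and rs_range: "\<And>n. set_pmf (rs n) \<subseteq> lists {..<n}"
    and rs_exch: "\<And>n \<pi>. bij_betw \<pi> {..<n} {..<n} \<Longrightarrow> map_pmf (map \<pi>) (rs n) = rs n"
    and R_meas: "(\<lambda>p. dist (snd p) (m (fst p))) \<in> borel_measurable G"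
    and F\<^sub>R_def: "\<And>t. F\<^sub>R t = measure G {p \<in> space G. dist (snd p) (m (fst p)) \<le> t}"
    and F\<^sub>R_cont: "continuous_on UNIV F\<^sub>R"
    and oob_meas: "\<And>n i. i < n \<Longrightarrow>
          (\<lambda>\<omega>. oob_res base agg B n \<omega> i) \<in> borel_measurable (bag_space G B rs \<Theta> n)"
    and dist_meas: "\<And>n i. i < n \<Longrightarrow>
          (\<lambda>\<omega>. dist (m (fst (fst \<omega> i))) (oob base agg B n \<omega> i (fst (fst \<omega> i))))
            \<in> borel_measurable (bag_space G B rs \<Theta> n)"
    and consistent: "to_zero_in_prob (bag_space G B rs \<Theta>)
          (\<lambda>n \<omega>. dist (m (fst (fst \<omega> 0))) (oob base agg B n \<omega> 0 (fst (fst \<omega> 0))))"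
  shows "to_zero_in_prob (bag_space G B rs \<Theta>)
           (\<lambda>n \<omega>. SUP t::real. \<bar>ecdf n (oob_res base agg B n \<omega>) t - F\<^sub>R t\<bar>)
         \<and> (\<forall>\<alpha>::real. 0 < \<alpha> \<and> \<alpha> < 1 \<longrightarrow>
              to_zero_in_prob (bag_space G B rs \<Theta>)
                (\<lambda>n \<omega>. F\<^sub>R (quantile (ecdf n (oob_res base agg B n \<omega>)) (1 - \<alpha>)) - (1 - \<alpha>)))"
proof -
  let ?P = "bag_space G B rs \<Theta>"
  note F = distribution_function_limits[OF G(1) R_meas F\<^sub>R_def]
  have sup: "asymp_null ?P (\<lambda>n \<omega>. \<eta> < \<bar>SUP t. \<bar>ecdf n (oob_res base agg B n \<omega>) t - F\<^sub>R t\<bar>\<bar>)"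
    if "0 < \<eta>" for \<eta>
  proof (rule asymp_null_sup_ecdf_perturbed[OF F(1) F\<^sub>R_cont F(2,3) abs_oob_res_diff_le _ _ that])
    show "asymp_null ?P (\<lambda>n \<omega>. \<epsilon> \<le> \<bar>ecdf n (\<lambda>i. dist (snd (fst \<omega> i)) (m (fst (fst \<omega> i)))) s - F\<^sub>R s\<bar>)"
      if "0 < \<epsilon>" for s \<epsilon>
      using asymp_null_ecdf_sample[OF G(1) Theta R_meas that] by (simp add: F\<^sub>R_def)
  qed (rule asymp_null_oob_err_fraction[OF G(1) Theta rs_exch dist_meas[folded oob_err_def]
        consistent[folded oob_err_def]])
  have "finite_measure (?P n)" for n
    using prob_space_bag_space[OF G(1) Theta] by (rule prob_space.finite_measure)
  then show ?thesis
    using sup asymp_null_abs_quantile_ecdf[OF F\<^sub>R_cont mono_tendsto_bounds[OF F] _ _ sup]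
    by (auto intro!: to_zero_in_probI)
qed

end
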